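(* For every fixed $(X,Y,Z)$, the partial gradient $X_0\mapsto\nabla_{X_0}\mathcal L_\eta(X,X_0;Y,Z)$ is $\frac3\eta$-Lipschitz continuous with respect to the Frobenius norm. Further, if $\{(X^k,X_0^k;Y^k,Z^k)\}_{k\ge0}$ is generated by ADAPD (defined in the context), then for all $k\ge0$, $$\mathcal L_\eta(X^{k+1},X_0^{k+1};Y^k,Z^k)-\mathcal L_\eta(X^{k+1},X_0^k;Y^k,Z^k)\le-\frac1{2\eta}\|X_0^{k+1}-X_0^k\|_F^2.$$
   Context: Notation: $\langle A,B\rangle=\sum_{i,j}a_{ij}b_{ij}$, $\|\cdot\|_F$ Frobenius norm, $e\in\mathbb R^N$ all-ones vector. Mixing matrix $W\in\mathbb R^{N\times N}$ of an undirected graph $\mathcal G=(\{1,\dots,N\},\mathcal E)$ with (i) $w_{ij}>0$ if $(i,j)\in\mathcal E$, $w_{ij}=0$ otherwise; (ii) $W=W^\top$; (iii) $\mathrm{null}(I-W)=\mathrm{span}\{e\}$; (iv) $-1<\lambda_N(W)\le\dots\le\lambda_2(W)<\lambda_1(W)=1$. $\sqrt{I-W}$ is the PSD square root of $I-W$. $f_i:\mathbb R^p\to\mathbb R$ differentiable; $F(X)=\frac1N\sum_if_i(x_i)$ for $X$ with rows $x_i^\top$, gradient $\nabla F(X)$ with rows $\frac1N\nabla f_i(x_i)^\top$. Augmented Lagrangian, $\eta>0$: $\mathcal L_\eta(X,X_0;Y,Z)=F(X)+\langle Y,X-X_0\rangle+\frac1{2\eta}\|X-X_0\|_F^2+\langle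 Z,\sqrt{I-W}X_0\rangle+\frac1{2\eta}\|\sqrt{I-W}X_0\|_F^2$. ADAPD: fix $\eta>0$ and non-increasing nonnegative $(\epsilon_k)_{k\ge1}$; arbitrary $X^0,X_0^0,Y^0$, $Z^0\in\mathrm{range}(\sqrt{I-W})$. For $k\ge0$: $X^{k+1}$ is any matrix such that each row $r_i^{k+1}$ of $R^{k+1}=\nabla F(X^{k+1})+Y^k+\frac1\eta(X^{k+1}-X_0^k)$ satisfies $\|r_i^{k+1}\|_2^2\le\epsilon_{k+1}/N$; $X_0^{k+1}=\frac12(WX_0^k+X^{k+1}+\eta(Y^k-\sqrt{I-W}Z^k))$, $Y^{k+1}=Y^k+\frac1\eta(X^{k+1}-X_0^{k+1})$, $Z^{k+1}=Z^k+\frac1\eta\sqrt{I-W}X_0^{k+1}$. *)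

theory Defs
  imports "HOL-Analysis.Analysis"
begin

text \<open>Matrices in R^(N x p) are rendered as real^'p^'n (rows indexed by 'n, N = CARD('n)).
  The inner product and norm on this type are the Frobenius ones.\<close>

definition ones :: "real^'n" where "ones = vec 1"

definition psd_sqrt :: "real^'n^'n \<Rightarrow> real^'n^'n" where
  "psd_sqrt M = (THE S. transpose S = S \<and> (\<forall>x. 0 \<le> x \<bullet> (S *v x)) \<and> S ** S = M)"

definition mixing_matrix :: "('n::finite \<Rightarrow> 'n \<Rightarrow> bool) \<Rightarrow> real^'n^'n \<Rightarrow> bool" where
  "mixing_matrix E W \<longleftrightarrow>
     (\<forall>i j. E i j \<longleftrightarrow> E j i) \<and>
     (\<forall>i j. i \<noteq> j \<longrightarrow> (E i j \<longrightarrow> W $ i $ j > 0) \<and> (\<not> E i j \<longrightarrow> W $ i $ j = 0)) \<and>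
     transpose W = W \<and>
     {x. (mat 1 - W) *v x = 0} = span {ones} \<and>
     (\<forall>c v. v \<noteq> 0 \<and> W *v v = c *\<^sub>R v \<longrightarrow> -1 < c \<and> c \<le> 1)"

definition Fobj :: "('n::finite \<Rightarrow> real^'p \<Rightarrow> real) \<Rightarrow> real^'p^'n \<Rightarrow> real" where
  "Fobj f X = (\<Sum>i\<in>UNIV. f i (X $ i)) / real CARD('n)"

definition gradF :: "('n::finite \<Rightarrow> real^'p \<Rightarrow> real^'p) \<Rightarrow> real^'p^'n \<Rightarrow> real^'p^'n" where
  "gradF g X = (\<chi> i. (1 / real CARD('n)) *\<^sub>R g i (X $ i))"

definition augL :: "('n::finite \<Rightarrow> real^'p \<Rightarrow> real) \<Rightarrow> real^'n^'n \<Rightarrow> real \<Rightarrow>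
    real^'p^'n \<Rightarrow> real^'p^'n \<Rightarrow> real^'p^'n \<Rightarrow> real^'p^'n \<Rightarrow> real" where
  "augL f W \<eta> X X0 Y Z =
     Fobj f X + Y \<bullet> (X - X0) + (1 / (2 * \<eta>)) * (norm (X - X0))\<^sup>2
     + Z \<bullet> (psd_sqrt (mat 1 - W) ** X0) + (1 / (2 * \<eta>)) * (norm (psd_sqrt (mat 1 - W) ** X0))\<^sup>2"

definition ADAPD :: "('n::finite \<Rightarrow> real^'p \<Rightarrow> real^'p) \<Rightarrow> real^'n^'n \<Rightarrow> real \<Rightarrow> (nat \<Rightarrow> real) \<Rightarrow>
    (nat \<Rightarrow> real^'p^'n) \<Rightarrow> (nat \<Rightarrow> real^'p^'n) \<Rightarrow> (nat \<Rightarrow> real^'p^'n) \<Rightarrow> (nat \<Rightarrow> real^'p^'n) \<Rightarrow> bool" where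
  "ADAPD g W \<eta> eps Xs X0s Ys Zs \<longleftrightarrow>
     (\<exists>M. Zs 0 = psd_sqrt (mat 1 - W) ** M) \<and>
     (\<forall>k. \<forall>i. (norm ((gradF g (Xs (Suc k)) + Ys k + (1 / \<eta>) *\<^sub>R (Xs (Suc k) - X0s k)) $ i))\<^sup>2
              \<le> eps (Suc k) / real CARD('n)) \<and>
     (\<forall>k. X0s (Suc k) = (1/2) *\<^sub>R (W ** X0s k + Xs (Suc k)
              + \<eta> *\<^sub>R (Ys k - psd_sqrt (mat 1 - W) ** Zs k))) \<and>
     (\<forall>k. Ys (Suc k) = Ys k + (1 / \<eta>) *\<^sub>R (Xs (Suc k) - X0s (Suc k))) \<and>
     (\<forall>k. Zs (Suc k) = Zs k + (1 / \<eta>) *\<^sub>R (psd_sqrt (mat 1 - W) ** X0s (Suc k)))"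

end

theory Submission
  imports Defs
begin

(* For fixed X, Y, Z the augmented Lagrangian is a quadratic function of X0 with Hessian
   (I + S^2)/eta = (2I - W)/eta, where S = sqrt(I - W). Since W is symmetric with spectrum in
   (-1, 1], this Hessian has norm at most 3/eta, which is the Lipschitz bound. The X0-update of
   ADAPD makes eta times the gradient at X0^(k+1) equal to -W D, where D = X0^(k+1) - X0^k, so the
   exact second-order expansion at X0^(k+1) gives
     L(X0^(k+1)) - L(X0^k) = -<D, W D>/(2 eta) - |D|^2/eta <= -|D|^2/(2 eta),
   because <D, W D> >= -|D|^2. The spectral facts about W, and the existence and uniqueness of the
   positive semidefinite square root presupposed by psd_sqrt, come from the spectral theorem for
   self-adjoint maps, proved by maximising the Rayleigh quotient on invariant subspaces. *)

section \<open>Spectral theorem for self-adjoint maps\<close>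

definition self_adjoint :: "('a::real_inner \<Rightarrow> 'a) \<Rightarrow> bool" where
  "self_adjoint f \<longleftrightarrow> linear f \<and> (\<forall>x y. f x \<bullet> y = x \<bullet> f y)"

lemma self_adjointD:
  "self_adjoint f \<Longrightarrow> linear f"
  "self_adjoint f \<Longrightarrow> f x \<bullet> y = x \<bullet> f y"
  unfolding self_adjoint_def by auto

definition orthonormal_basis :: "'a::real_inner set \<Rightarrow> bool" where
  "orthonormal_basis B \<longleftrightarrow>
     finite B \<and> pairwise orthogonal B \<and> (\<forall>b\<in>B. norm b = 1) \<and> span B = UNIV"

lemma inner_orthonormal_sum:
  assumes "finite B" "pairwise orthogonal B" "\<And>b. b \<in> B \<Longrightarrow> norm b = 1" "b \<in> B"
  shows "(\<Sum>b'\<in>B. c b' *\<^sub>R b') \<bullet> b = c b"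
proof -
  have "(\<Sum>b'\<in>B. c b' *\<^sub>R b') \<bullet> b = (\<Sum>b'\<in>B. if b' = b then c b else 0)"
    unfolding inner_sum_left
  proof (rule sum.cong)
    fix b' assume "b' \<in> B"
    then show "(c b' *\<^sub>R b') \<bullet> b = (if b' = b then c b else 0)"
      using assms(2-4) norm_eq_1 unfolding pairwise_def orthogonal_def by auto
  qed simp
  then show ?thesis
    using assms(1,4) by simp
qed

lemma orthonormal_basis_expansion:
  "orthonormal_basis B \<Longrightarrow> (\<Sum>b\<in>B. (x \<bullet> b) *\<^sub>R b) = x"
  unfolding orthonormal_basis_def by (intro orthonormal_basis_expand) auto

lemma orthonormal_basis_parseval:
  "orthonormal_basis B \<Longrightarrow> x \<bullet> y = (\<Sum>b\<in>B. (x \<bullet> b) * (y \<bullet> b))"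
  using orthonormal_basis_expansion[of B x]
  by (metis (no_types, lifting) inner_scaleR_left inner_sum_left sum.cong inner_commute)

lemma orthonormal_basis_eqI:
  "orthonormal_basis B \<Longrightarrow> (\<And>b. b \<in> B \<Longrightarrow> x \<bullet> b = y \<bullet> b) \<Longrightarrow> x = y"
  using orthonormal_basis_expansion[of B x] orthonormal_basis_expansion[of B y]
  by (metis (no_types, lifting) sum.cong)

lemma self_adjoint_inner_add_scaled:
  assumes "self_adjoint f"
  shows "(x + t *\<^sub>R y) \<bullet> f (x + t *\<^sub>R y) = x \<bullet> f x + 2 * t * (y \<bullet> f x) + t\<^sup>2 * (y \<bullet> f y)"
proof -
  have "x \<bullet> f y = y \<bullet> f x"
    using self_adjointD(2)[OF assms, of y x] by (simp add: inner_commute)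
  then show ?thesis
    using self_adjointD(1)[OF assms]
    by (simp add: linear_add linear_scale inner_add_left inner_add_right power2_eq_square algebra_simps)
qed

lemma linear_coeff_zero_if_quadratic_nonpos:
  fixes p q :: real
  assumes "\<And>t. 2 * t * p + t\<^sup>2 * q \<le> 0"
  shows "p = 0"
proof -
  define a where "a = 1 + \<bar>q\<bar>"
  have "a > 0" "2 * a + q > 0" unfolding a_def by auto
  have "(2 * (p / a) * p + (p / a)\<^sup>2 * q) * a\<^sup>2 \<le> 0"
    using assms[of "p / a"] by (simp add: mult_nonpos_nonneg)
  also have "(2 * (p / a) * p + (p / a)\<^sup>2 * q) * a\<^sup>2 = p\<^sup>2 * (2 * a + q)"
    using \<open>a > 0\<close> by (simp add: field_simps power2_eq_square)
  finally have "p\<^sup>2 \<le> 0"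
    using \<open>2 * a + q > 0\<close> by (simp add: mult_le_0_iff)
  then show ?thesis by simp
qed

lemma self_adjoint_psd_on_subspace_null:
  assumes f: "self_adjoint f" and V: "subspace V"
    and psd: "\<And>y. y \<in> V \<Longrightarrow> 0 \<le> y \<bullet> f y"
    and x: "x \<in> V" "x \<bullet> f x = 0" and y: "y \<in> V"
  shows "y \<bullet> f x = 0"
proof -
  have "2 * t * - (y \<bullet> f x) + t\<^sup>2 * - (y \<bullet> f y) \<le> 0" for t
  proof -
    have "0 \<le> (x + t *\<^sub>R y) \<bullet> f (x + t *\<^sub>R y)"
      using V x y by (intro psd) (simp add: subspace_add subspace_scale)
    then show ?thesis
      unfolding self_adjoint_inner_add_scaled[OF f] using x by simp
  qed
  then show ?thesis
    using linear_coeff_zero_if_quadratic_nonpos by fastforce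
qed

lemma self_adjoint_psd_null:
  assumes "self_adjoint f" "\<And>y. 0 \<le> y \<bullet> f y" "x \<bullet> f x = 0"
  shows "f x = 0"
  using self_adjoint_psd_on_subspace_null[OF assms(1) subspace_UNIV, of x "f x"] assms by simp

lemma rayleigh_quotient_maximizer:
  fixes f :: "'a::euclidean_space \<Rightarrow> 'a"
  assumes "linear f" and V: "subspace V" "V \<noteq> {0}"
  obtains u where "u \<in> V" "norm u = 1" "\<And>x. x \<in> V \<Longrightarrow> x \<bullet> f x \<le> (u \<bullet> f u) * (x \<bullet> x)"
proof -
  define K where "K = V \<inter> sphere 0 1"
  obtain v where v: "v \<in> V" "v \<noteq> 0"
    using V subspace_0 by blast
  have "compact K"
    unfolding K_def by (intro closed_Int_compact closed_subspace V compact_sphere)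
  moreover have "v /\<^sub>R norm v \<in> K"
    using v V unfolding K_def by (simp add: subspace_scale)
  then have "K \<noteq> {}" by blast
  moreover have "continuous_on K (\<lambda>x. x \<bullet> f x)"
    using \<open>linear f\<close> by (intro continuous_intros linear_continuous_on linear_conv_bounded_linear[THEN iffD1])
  ultimately obtain u where u: "u \<in> K" and max: "\<And>y. y \<in> K \<Longrightarrow> y \<bullet> f y \<le> u \<bullet> f u"
    using continuous_attains_sup by metis
  have "x \<bullet> f x \<le> (u \<bullet> f u) * (x \<bullet> x)" if "x \<in> V" for x
  proof (cases "x = 0")
    case False
    have "x /\<^sub>R norm x \<in> K"
      using False that V unfolding K_def by (simp add: subspace_scale)
    moreover have "(x /\<^sub>R norm x) \<bullet> f (x /\<^sub>R norm x) = (x \<bullet> f x) / (norm x)\<^sup>2"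
      using \<open>linear f\<close> by (simp add: linear_scale power2_eq_square field_simps)
    ultimately have "(x \<bullet> f x) / (norm x)\<^sup>2 \<le> u \<bullet> f u"
      using max by metis
    then show ?thesis
      using False by (simp add: divide_le_eq power2_norm_eq_inner mult.commute)
  qed (use \<open>linear f\<close> linear_0 in auto)
  with u show ?thesis
    using that unfolding K_def by auto
qed

lemma self_adjoint_unit_eigenvector:
  fixes f :: "'a::euclidean_space \<Rightarrow> 'a"
  assumes f: "self_adjoint f" and V: "subspace V" "V \<noteq> {0}" "f ` V \<subseteq> V"
  obtains u where "u \<in> V" "norm u = 1" "f u = (u \<bullet> f u) *\<^sub>R u"
proof -
  obtain u where u: "u \<in> V" "norm u = 1"
    and max: "\<And>x. x \<in> V \<Longrightarrow> x \<bullet> f x \<le> (u \<bullet> f u) * (x \<bullet> x)"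
    using rayleigh_quotient_maximizer[OF self_adjointD(1)[OF f] V(1,2)] by blast
  \<comment> \<open>As \<open>u\<close> maximises the Rayleigh quotient, \<open>l I - f\<close> is positive semidefinite on \<open>V\<close>.\<close>
  define l where "l = u \<bullet> f u"
  define g where "g x = l *\<^sub>R x - f x" for x
  have "linear g"
    using self_adjointD(1)[OF f] unfolding g_def
    by (intro linearI) (simp_all add: linear_add linear_scale algebra_simps)
  then have g: "self_adjoint g"
    using self_adjointD(2)[OF f] unfolding self_adjoint_def g_def
    by (simp add: inner_diff_left inner_diff_right)
  have "u \<bullet> u = 1"
    using u by (simp add: norm_eq_1)
  then have "u \<bullet> g u = 0"
    unfolding g_def l_def by (simp add: inner_diff_right)
  moreover have "g u \<in> V"
    using u V unfolding g_def by (auto simp: subspace_diff subspace_scale)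
  moreover have "0 \<le> y \<bullet> g y" if "y \<in> V" for y
    using max[OF that] unfolding g_def l_def by (simp add: inner_diff_right)
  ultimately have "g u \<bullet> g u = 0"
    using self_adjoint_psd_on_subspace_null[OF g V(1)] u by blast
  then show ?thesis
    using that u unfolding g_def l_def by simp
qed

lemma subspace_orthogonal_slice:
  "subspace V \<Longrightarrow> subspace {x\<in>V. u \<bullet> x = 0}"
  unfolding subspace_def by (auto simp: inner_add_right)

lemma dim_orthogonal_slice_less:
  fixes u :: "'a::euclidean_space"
  assumes V: "subspace V" and u: "u \<in> V" "u \<noteq> 0"
  shows "dim {x\<in>V. u \<bullet> x = 0} < dim V"
proof -
  have "u \<notin> {x\<in>V. u \<bullet> x = 0}"
    using u by simp
  then have "{x\<in>V. u \<bullet> x = 0} \<subset> V"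
    using u by blast
  moreover have "span {x\<in>V. u \<bullet> x = 0} = {x\<in>V. u \<bullet> x = 0}" "span V = V"
    using V subspace_orthogonal_slice[OF V] by (simp_all add: span_eq_iff)
  ultimately have "span {x\<in>V. u \<bullet> x = 0} \<subset> span V" by (simp only:)
  then show ?thesis by (rule dim_psubset)
qed

lemma span_insert_unit_orthogonal_slice:
  assumes V: "subspace V" and u: "u \<in> V" "norm u = 1" and B: "span B = {x\<in>V. u \<bullet> x = 0}"
  shows "span (insert u B) = V"
proof
  show "span (insert u B) \<subseteq> V"
    using B u V span_superset by (intro span_minimal) auto
  show "V \<subseteq> span (insert u B)"
  proof
    fix x assume "x \<in> V"
    then have "x - (u \<bullet> x) *\<^sub>R u \<in> span B"
      using u V B by (auto simp: subspace_diff subspace_scale inner_diff_right norm_eq_1)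
    then have "x - (u \<bullet> x) *\<^sub>R u + (u \<bullet> x) *\<^sub>R u \<in> span (insert u B)"
      by (meson span_add span_base span_mono span_scale insertI1 subset_insertI subsetD)
    then show "x \<in> span (insert u B)" by simp
  qed
qed

lemma self_adjoint_invariant_subspace_eigenbasis:
  fixes f :: "'a::euclidean_space \<Rightarrow> 'a"
  assumes f: "self_adjoint f"
  shows "subspace V \<Longrightarrow> f ` V \<subseteq> V \<Longrightarrow>
    \<exists>B\<subseteq>V. finite B \<and> pairwise orthogonal B \<and> (\<forall>b\<in>B. norm b = 1 \<and> f b = (b \<bullet> f b) *\<^sub>R b)
      \<and> span B = V"
proof (induction "dim V" arbitrary: V rule: less_induct)
  case less
  show ?case
  proof (cases "V = {0}")
    case True
    then show ?thesis by (intro exI[of _ "{}"]) auto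
  next
    case False
    obtain u where u: "u \<in> V" "norm u = 1" "f u = (u \<bullet> f u) *\<^sub>R u"
      using self_adjoint_unit_eigenvector[OF f less.prems(1) False less.prems(2)] by blast
    define V' where "V' = {x\<in>V. u \<bullet> x = 0}"
    have "f ` V' \<subseteq> V'"
    proof
      fix y assume "y \<in> f ` V'"
      then obtain x where "x \<in> V'" "y = f x" by blast
      moreover have "u \<bullet> f x = (u \<bullet> f u) * (u \<bullet> x)"
        using self_adjointD(2)[OF f, of u x] u(3) by (metis inner_scaleR_left)
      ultimately show "y \<in> V'"
        using less.prems(2) unfolding V'_def by auto
    qed
    moreover have "dim V' < dim V" "subspace V'"
      using dim_orthogonal_slice_less subspace_orthogonal_slice less.prems(1) u
      unfolding V'_def by fastforce+
    ultimately obtain B' where B': "B' \<subseteq> V'" "finite B'" "pairwise orthogonal B'"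
      "\<forall>b\<in>B'. norm b = 1 \<and> f b = (b \<bullet> f b) *\<^sub>R b" "span B' = V'"
      using less.hyps by blast
    have "pairwise orthogonal (insert u B')"
      using B'(1,3) unfolding pairwise_insert V'_def orthogonal_def by (auto simp: inner_commute)
    moreover have "span (insert u B') = V"
      using span_insert_unit_orthogonal_slice less.prems(1) u B'(5) unfolding V'_def by blast
    ultimately show ?thesis
      using B' u unfolding V'_def by (intro exI[of _ "insert u B'"]) auto
  qed
qed

theorem self_adjoint_orthonormal_eigenbasis:
  fixes f :: "'a::euclidean_space \<Rightarrow> 'a"
  assumes "self_adjoint f"
  obtains B where "orthonormal_basis B" "\<And>b. b \<in> B \<Longrightarrow> f b = (b \<bullet> f b) *\<^sub>R b"
  using self_adjoint_invariant_subspace_eigenbasis[OF assms subspace_UNIV]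
  unfolding orthonormal_basis_def by blast

section \<open>Spectral bounds and positive semidefinite square roots\<close>

lemma self_adjoint_inner_eigenvector:
  "self_adjoint f \<Longrightarrow> f b = c *\<^sub>R b \<Longrightarrow> f x \<bullet> b = c * (x \<bullet> b)"
  by (metis self_adjointD(2) inner_commute inner_scaleR_left)

lemma self_adjoint_quadratic_form_bounds:
  fixes f :: "'a::euclidean_space \<Rightarrow> 'a"
  assumes f: "self_adjoint f"
    and eig: "\<And>c v. v \<noteq> 0 \<Longrightarrow> f v = c *\<^sub>R v \<Longrightarrow> m \<le> c \<and> c \<le> M"
  shows "m * (x \<bullet> x) \<le> x \<bullet> f x" "x \<bullet> f x \<le> M * (x \<bullet> x)"
proof -
  obtain B where B: "orthonormal_basis B" and fB: "\<And>b. b \<in> B \<Longrightarrow> f b = (b \<bullet> f b) *\<^sub>R b"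
    using self_adjoint_orthonormal_eigenbasis[OF f] by blast
  have mM: "m \<le> b \<bullet> f b \<and> b \<bullet> f b \<le> M" if "b \<in> B" for b
    using B that fB[OF that] unfolding orthonormal_basis_def by (intro eig) auto
  have form: "x \<bullet> f x = (\<Sum>b\<in>B. (b \<bullet> f b) * (x \<bullet> b)\<^sup>2)"
    unfolding orthonormal_basis_parseval[OF B, of x "f x"]
    using self_adjoint_inner_eigenvector[OF f fB]
    by (intro sum.cong) (simp_all add: power2_eq_square)
  have norm: "x \<bullet> x = (\<Sum>b\<in>B. (x \<bullet> b)\<^sup>2)"
    unfolding orthonormal_basis_parseval[OF B, of x x] by (simp add: power2_eq_square)
  show "m * (x \<bullet> x) \<le> x \<bullet> f x" "x \<bullet> f x \<le> M * (x \<bullet> x)"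
    unfolding form norm sum_distrib_left using mM
    by (auto intro!: sum_mono mult_right_mono)
qed

lemma self_adjoint_norm_bound:
  fixes f :: "'a::euclidean_space \<Rightarrow> 'a"
  assumes f: "self_adjoint f" and "0 \<le> C"
    and eig: "\<And>c v. v \<noteq> 0 \<Longrightarrow> f v = c *\<^sub>R v \<Longrightarrow> \<bar>c\<bar> \<le> C"
  shows "norm (f x) \<le> C * norm x"
proof -
  obtain B where B: "orthonormal_basis B" and fB: "\<And>b. b \<in> B \<Longrightarrow> f b = (b \<bullet> f b) *\<^sub>R b"
    using self_adjoint_orthonormal_eigenbasis[OF f] by blast
  have "(b \<bullet> f b)\<^sup>2 \<le> C\<^sup>2" if "b \<in> B" for b
    using B that fB[OF that] eig \<open>0 \<le> C\<close> unfolding orthonormal_basis_def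
    by (metis abs_le_square_iff abs_of_nonneg norm_zero zero_neq_one)
  moreover have "f x \<bullet> f x = (\<Sum>b\<in>B. (b \<bullet> f b)\<^sup>2 * (x \<bullet> b)\<^sup>2)"
    unfolding orthonormal_basis_parseval[OF B, of "f x" "f x"]
    using self_adjoint_inner_eigenvector[OF f fB]
    by (intro sum.cong) (simp_all add: power2_eq_square)
  ultimately have "f x \<bullet> f x \<le> C\<^sup>2 * (x \<bullet> x)"
    unfolding orthonormal_basis_parseval[OF B, of x x] sum_distrib_left
    by (auto intro!: sum_mono mult_right_mono simp: power2_eq_square)
  then have "(norm (f x))\<^sup>2 \<le> (C * norm x)\<^sup>2"
    by (simp add: power2_norm_eq_inner power_mult_distrib)
  then show ?thesis
    using \<open>0 \<le> C\<close> by (simp add: power2_le_iff_abs_le)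
qed

lemma self_adjoint_psd_sqrt_exists:
  fixes f :: "'a::euclidean_space \<Rightarrow> 'a"
  assumes f: "self_adjoint f" and psd: "\<And>x. 0 \<le> x \<bullet> f x"
  obtains s where "self_adjoint s" "\<And>x. 0 \<le> x \<bullet> s x" "\<And>x. s (s x) = f x"
proof -
  obtain B where B: "orthonormal_basis B" and fB: "\<And>b. b \<in> B \<Longrightarrow> f b = (b \<bullet> f b) *\<^sub>R b"
    using self_adjoint_orthonormal_eigenbasis[OF f] by blast
  define r where "r b = sqrt (b \<bullet> f b)" for b
  define s where "s x = (\<Sum>b\<in>B. (r b * (x \<bullet> b)) *\<^sub>R b)" for x
  have sB: "s x \<bullet> b = r b * (x \<bullet> b)" if "b \<in> B" for b x
    unfolding s_def using B that unfolding orthonormal_basis_def by (intro inner_orthonormal_sum) auto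
  have "linear s"
    unfolding s_def
    by (intro linearI) (simp_all add: inner_add_left distrib_left scaleR_add_left sum.distrib
        scaleR_sum_right mult.left_commute)
  moreover have "s x \<bullet> y = x \<bullet> s y" for x y
    unfolding orthonormal_basis_parseval[OF B, of "s x" y] orthonormal_basis_parseval[OF B, of x "s y"]
    by (intro sum.cong) (simp_all add: sB)
  ultimately have "self_adjoint s"
    unfolding self_adjoint_def by blast
  moreover have "0 \<le> x \<bullet> s x" for x
    unfolding orthonormal_basis_parseval[OF B, of x "s x"]
  proof (intro sum_nonneg)
    fix b assume "b \<in> B"
    have "0 \<le> r b * (x \<bullet> b)\<^sup>2"
      by (simp add: r_def psd)
    then show "0 \<le> (x \<bullet> b) * (s x \<bullet> b)"
      by (simp add: sB[OF \<open>b \<in> B\<close>] power2_eq_square ac_simps)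
  qed
  moreover have "s (s x) = f x" for x
  proof (rule orthonormal_basis_eqI[OF B])
    fix b assume "b \<in> B"
    then show "s (s x) \<bullet> b = f x \<bullet> b"
      using psd[of b] self_adjoint_inner_eigenvector[OF f fB[OF \<open>b \<in> B\<close>]]
      by (simp add: sB r_def)
  qed
  ultimately show ?thesis
    using that by blast
qed

lemma self_adjoint_psd_sqrt_unique:
  fixes s t :: "'a::euclidean_space \<Rightarrow> 'a"
  assumes s: "self_adjoint s" "\<And>x. 0 \<le> x \<bullet> s x"
    and t: "self_adjoint t" "\<And>x. 0 \<le> x \<bullet> t x"
    and sq: "\<And>x. s (s x) = t (t x)"
  shows "s = t"
proof -
  define d where "d x = s x - t x" for x
  have lin: "linear s" "linear t"
    using s t by (auto dest: self_adjointD)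
  then have "linear d"
    unfolding d_def by (intro linearI) (simp_all add: linear_add linear_scale algebra_simps)
  then have d: "self_adjoint d"
    using s t unfolding self_adjoint_def d_def by (simp add: inner_diff_left inner_diff_right)
  obtain B where B: "orthonormal_basis B" and dB: "\<And>b. b \<in> B \<Longrightarrow> d b = (b \<bullet> d b) *\<^sub>R b"
    using self_adjoint_orthonormal_eigenbasis[OF d] by blast
  have "d b = 0" if "b \<in> B" for b
  proof (cases "b \<bullet> d b = 0")
    case False
    have "s (d b) + d (t b) = 0"
      using lin sq unfolding d_def by (simp add: linear_diff)
    then have "s (d b) \<bullet> b + d (t b) \<bullet> b = 0"
      by (metis inner_add_left inner_zero_left)
    moreover have "s (d b) \<bullet> b = (b \<bullet> d b) * (s b \<bullet> b)"
      by (metis self_adjointD(2)[OF s(1)] dB[OF that] inner_scaleR_left inner_commute)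
    moreover have "d (t b) \<bullet> b = (b \<bullet> d b) * (t b \<bullet> b)"
      by (rule self_adjoint_inner_eigenvector[OF d dB[OF that]])
    ultimately have "(b \<bullet> d b) * (s b \<bullet> b + t b \<bullet> b) = 0"
      by (simp add: distrib_left)
    then have "b \<bullet> s b = 0" "b \<bullet> t b = 0"
      using False s(2)[of b] t(2)[of b] by (simp_all add: inner_commute)
    then show ?thesis
      unfolding d_def using self_adjoint_psd_null[OF s] self_adjoint_psd_null[OF t] by (metis diff_self)
  qed (use dB[OF that] in simp)
  then have "d x = 0" for x
    using orthonormal_basis_expansion[OF B, of x] \<open>linear d\<close>
    by (metis (no_types, lifting) linear_sum linear_scale scaleR_zero_right sum.neutral)
  then show ?thesis
    unfolding d_def by auto
qed

lemma symmetric_matrix_iff_self_adjoint: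
  fixes A :: "real^'n^'n"
  shows "transpose A = A \<longleftrightarrow> self_adjoint ((*v) A)"
proof
  assume "transpose A = A"
  then show "self_adjoint ((*v) A)"
    unfolding self_adjoint_def
    by (metis dot_lmul_matrix inner_commute matrix_vector_mul_linear transpose_matrix_vector)
next
  assume "self_adjoint ((*v) A)"
  then have "adjoint ((*v) A) = (*v) A"
    unfolding self_adjoint_def by (intro adjoint_unique) blast
  then show "transpose A = A"
    unfolding adjoint_matrix by (metis matrix_eq)
qed

lemma psd_sqrt_symmetric_square:
  fixes M :: "real^'n^'n"
  assumes sym: "transpose M = M" and psd: "\<And>x. 0 \<le> x \<bullet> (M *v x)"
  shows "transpose (psd_sqrt M) = psd_sqrt M" "psd_sqrt M ** psd_sqrt M = M"
proof -
  obtain s where s: "self_adjoint s" "\<And>x. 0 \<le> x \<bullet> s x" "\<And>x. s (s x) = M *v x"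
    using self_adjoint_psd_sqrt_exists[of "(*v) M"] sym psd
    unfolding symmetric_matrix_iff_self_adjoint by blast
  define S where "S = matrix s"
  have Sv: "(*v) S = s"
    unfolding S_def using s(1) by (simp add: self_adjoint_def matrix_vector_mul(2))
  have Sx: "S *v x = s x" for x
    using Sv by simp
  have is_sqrt: "transpose T = T \<and> (\<forall>x. 0 \<le> x \<bullet> (T *v x)) \<and> T ** T = M \<longleftrightarrow> T = S" for T
  proof
    assume T: "transpose T = T \<and> (\<forall>x. 0 \<le> x \<bullet> (T *v x)) \<and> T ** T = M"
    have "(*v) T = (*v) S"
      using T s unfolding Sv symmetric_matrix_iff_self_adjoint
      by (intro self_adjoint_psd_sqrt_unique) (auto simp: matrix_vector_mul_assoc)
    then show "T = S"
      by (metis matrix_eq)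
  next
    have "transpose S = S"
      using s(1) unfolding symmetric_matrix_iff_self_adjoint Sv .
    moreover have "S ** S = M"
      unfolding matrix_eq by (simp add: matrix_vector_mul_assoc[symmetric] Sx s(3))
    ultimately show "T = S \<Longrightarrow> transpose T = T \<and> (\<forall>x. 0 \<le> x \<bullet> (T *v x)) \<and> T ** T = M"
      using s(2) by (simp add: Sx)
  qed
  then have "psd_sqrt M = S"
    unfolding psd_sqrt_def is_sqrt by simp
  then show "transpose (psd_sqrt M) = psd_sqrt M" "psd_sqrt M ** psd_sqrt M = M"
    using is_sqrt[of S] by auto
qed

lemma mixing_matrix_symmetric:
  "mixing_matrix E W \<Longrightarrow> transpose W = W"
  unfolding mixing_matrix_def by blast

lemma mixing_matrix_quadratic_form_bounds:
  assumes "mixing_matrix E W"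
  shows "- (x \<bullet> x) \<le> x \<bullet> (W *v x)" "x \<bullet> (W *v x) \<le> x \<bullet> x"
  using self_adjoint_quadratic_form_bounds[of "(*v) W" "-1" 1 x] assms
  unfolding mixing_matrix_def symmetric_matrix_iff_self_adjoint by force+

lemma mixing_matrix_norm_le:
  assumes "mixing_matrix E W"
  shows "norm (W *v x) \<le> norm x"
  using self_adjoint_norm_bound[of "(*v) W" 1 x] assms
  unfolding mixing_matrix_def symmetric_matrix_iff_self_adjoint by force

lemma mixing_matrix_psd_sqrt:
  assumes W: "mixing_matrix E W"
  shows "transpose (psd_sqrt (mat 1 - W)) = psd_sqrt (mat 1 - W)"
    "psd_sqrt (mat 1 - W) ** psd_sqrt (mat 1 - W) = mat 1 - W"
proof -
  have "transpose (mat 1 - W) = mat 1 - W"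
    using mixing_matrix_symmetric[OF W] unfolding transpose_def
    by (simp add: vec_eq_iff mat_def)
  moreover have "0 \<le> x \<bullet> ((mat 1 - W) *v x)" for x
    using mixing_matrix_quadratic_form_bounds(2)[OF W, of x]
    by (simp add: matrix_vector_mult_diff_rdistrib inner_diff_right)
  ultimately show "transpose (psd_sqrt (mat 1 - W)) = psd_sqrt (mat 1 - W)"
    "psd_sqrt (mat 1 - W) ** psd_sqrt (mat 1 - W) = mat 1 - W"
    using psd_sqrt_symmetric_square by blast+
qed

section \<open>Matrices acting on the Frobenius space\<close>

lemma inner_vec_columns:
  fixes X Y :: "real^'p^'n"
  shows "X \<bullet> Y = (\<Sum>j\<in>UNIV. column j X \<bullet> column j Y)"
  unfolding inner_vec_def column_def by (simp add: sum.swap[of _ "UNIV::'n set"])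

lemma column_matrix_matrix_mult:
  "column j (M ** X) = M *v column j X"
  by (simp add: column_def matrix_matrix_mult_def matrix_vector_mult_def vec_eq_iff)

lemma linear_matrix_matrix_mult_left:
  fixes M :: "real^'n^'m"
  shows "linear (\<lambda>X::real^'p^'n. M ** X)"
  by (rule linearI)
    (simp_all add: matrix_matrix_mult_def vec_eq_iff sum.distrib sum_distrib_left algebra_simps)

lemma matrix_matrix_mult_diff_left:
  fixes M :: "real^'n^'m"
  shows "M ** (A - B) = M ** A - M ** B"
  using linear_diff[OF linear_matrix_matrix_mult_left] .

lemma matrix_matrix_mult_diff_right:
  fixes A B :: "'a::ring_1^'n^'m"
  shows "(A - B) ** C = A ** C - B ** C"
  by (simp add: matrix_matrix_mult_def vec_eq_iff sum_subtractf algebra_simps)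

lemma square_root_matrix_mult:
  fixes S W :: "real^'n^'n" and V :: "real^'p^'n"
  assumes "S ** S = mat 1 - W"
  shows "S ** (S ** V) = V - W ** V"
  by (simp add: matrix_mul_assoc assms matrix_matrix_mult_diff_right)

lemma symmetric_matrix_mult_inner:
  fixes M :: "real^'n^'n" and X Y :: "real^'p^'n"
  assumes "transpose M = M"
  shows "(M ** X) \<bullet> Y = X \<bullet> (M ** Y)"
  using assms unfolding symmetric_matrix_iff_self_adjoint self_adjoint_def
  by (simp add: inner_vec_columns column_matrix_matrix_mult)

lemma matrix_mult_norm_le:
  fixes M :: "real^'n^'n" and X :: "real^'p^'n"
  assumes "\<And>x. norm (M *v x) \<le> norm x"
  shows "norm (M ** X) \<le> norm X"
proof -
  have "(M ** X) \<bullet> (M ** X) \<le> X \<bullet> X"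
    unfolding inner_vec_columns column_matrix_matrix_mult
    using assms by (intro sum_mono) (simp add: norm_le)
  then show ?thesis
    by (simp add: norm_le)
qed

lemma matrix_mult_quadratic_form_ge:
  fixes M :: "real^'n^'n" and X :: "real^'p^'n"
  assumes "\<And>x. m * (x \<bullet> x) \<le> x \<bullet> (M *v x)"
  shows "m * (X \<bullet> X) \<le> X \<bullet> (M ** X)"
  unfolding inner_vec_columns column_matrix_matrix_mult sum_distrib_left
  using assms by (intro sum_mono) simp

section \<open>The augmented Lagrangian as a function of X0\<close>

definition augL_grad_X0 :: "real^'n^'n \<Rightarrow> real \<Rightarrow> real^'p^'n \<Rightarrow> real^'p^'n \<Rightarrow> real^'p^'n \<Rightarrow>
    real^'p^'n \<Rightarrow> real^'p^'n" where
  "augL_grad_X0 W \<eta> X Y Z X0 =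
     - Y + (1 / \<eta>) *\<^sub>R (X0 - X) + psd_sqrt (mat 1 - W) ** Z
     + (1 / \<eta>) *\<^sub>R (psd_sqrt (mat 1 - W) ** (psd_sqrt (mat 1 - W) ** X0))"

lemma has_derivative_augL_X0:
  fixes W :: "real^'n^'n"
  defines "S \<equiv> psd_sqrt (mat 1 - W)"
  assumes S: "transpose S = S"
  shows "((\<lambda>V. augL f W \<eta> X V Y Z) has_derivative (\<lambda>H. augL_grad_X0 W \<eta> X Y Z V \<bullet> H)) (at V)"
proof -
  have L: "(\<lambda>V. augL f W \<eta> X V Y Z) = (\<lambda>V. Fobj f X + Y \<bullet> (X - V) + (1 / (2 * \<eta>)) * ((X - V) \<bullet> (X - V))
      + Z \<bullet> (S ** V) + (1 / (2 * \<eta>)) * ((S ** V) \<bullet> (S ** V)))"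
    unfolding augL_def S_def by (simp add: power2_norm_eq_inner)
  have S_deriv: "((\<lambda>V. S ** V) has_derivative (\<lambda>H. S ** H)) (at V)"
    using linear_matrix_matrix_mult_left[of S]
    by (intro bounded_linear_imp_has_derivative) (simp add: linear_conv_bounded_linear)
  show ?thesis
    unfolding L
    apply (rule has_derivative_eq_rhs)
     apply (rule derivative_eq_intros S_deriv refl)+
    apply (rule ext)
    subgoal for H
      using symmetric_matrix_mult_inner[OF S, of Z H] symmetric_matrix_mult_inner[OF S, of "S ** V" H]
      by (cases "\<eta> = 0") (simp_all add: augL_grad_X0_def S_def[symmetric] inner_add_left
          inner_add_right inner_diff_left inner_diff_right inner_commute field_simps)
    done
qed

lemma augL_X0_difference:
  fixes W :: "real^'n^'n"
  defines "S \<equiv> psd_sqrt (mat 1 - W)"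
  assumes S: "transpose S = S"
  shows "augL f W \<eta> X Q Y Z - augL f W \<eta> X P Y Z
    = augL_grad_X0 W \<eta> X Y Z Q \<bullet> (Q - P) - (1 / (2 * \<eta>)) * ((norm (Q - P))\<^sup>2 + (norm (S ** (Q - P)))\<^sup>2)"
proof -
  define D where "D = Q - P"
  have P: "P = Q - D" and SP: "S ** P = S ** Q - S ** D"
    unfolding D_def by (simp_all add: matrix_matrix_mult_diff_left)
  have "augL f W \<eta> X Q Y Z - augL f W \<eta> X P Y Z
      = (Y \<bullet> (X - Q) - Y \<bullet> (X - P)) + (1 / (2 * \<eta>)) * ((norm (X - Q))\<^sup>2 - (norm (X - P))\<^sup>2)
        + (Z \<bullet> (S ** Q) - Z \<bullet> (S ** P)) + (1 / (2 * \<eta>)) * ((norm (S ** Q))\<^sup>2 - (norm (S ** P))\<^sup>2)"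
    unfolding augL_def S_def by (simp add: algebra_simps)
  also have "Y \<bullet> (X - Q) - Y \<bullet> (X - P) = - (Y \<bullet> D)"
    unfolding P by (simp add: inner_diff_right)
  also have "(norm (X - Q))\<^sup>2 - (norm (X - P))\<^sup>2 = 2 * ((Q - X) \<bullet> D) - D \<bullet> D"
    unfolding P by (simp add: power2_norm_eq_inner inner_diff_left inner_diff_right inner_commute)
  also have "Z \<bullet> (S ** Q) - Z \<bullet> (S ** P) = (S ** Z) \<bullet> D"
    unfolding SP using symmetric_matrix_mult_inner[OF S, of Z D] by (simp add: inner_diff_right)
  also have "(norm (S ** Q))\<^sup>2 - (norm (S ** P))\<^sup>2 = 2 * ((S ** (S ** Q)) \<bullet> D) - (norm (S ** D))\<^sup>2"
    unfolding SP using symmetric_matrix_mult_inner[OF S, of "S ** Q" D]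
    by (simp add: power2_norm_eq_inner inner_diff_left inner_diff_right inner_commute)
  also have "- (Y \<bullet> D) + (1 / (2 * \<eta>)) * (2 * ((Q - X) \<bullet> D) - D \<bullet> D) + (S ** Z) \<bullet> D
      + (1 / (2 * \<eta>)) * (2 * ((S ** (S ** Q)) \<bullet> D) - (norm (S ** D))\<^sup>2)
      = augL_grad_X0 W \<eta> X Y Z Q \<bullet> D - (1 / (2 * \<eta>)) * ((norm D)\<^sup>2 + (norm (S ** D))\<^sup>2)"
    unfolding augL_grad_X0_def S_def[symmetric]
    by (simp add: power2_norm_eq_inner algebra_simps)
  finally show ?thesis
    unfolding D_def .
qed

lemma augL_grad_X0_lipschitz:
  fixes W :: "real^'n^'n"
  defines "S \<equiv> psd_sqrt (mat 1 - W)"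
  assumes SS: "S ** S = mat 1 - W" and W: "\<And>V::real^'p^'n. norm (W ** V) \<le> norm V"
    and "0 < \<eta>"
  shows "(3 / \<eta>)-lipschitz_on UNIV (augL_grad_X0 W \<eta> X Y (Z::real^'p^'n))"
proof (rule lipschitz_onI)
  fix A B :: "real^'p^'n"
  define D where "D = A - B"
  have "augL_grad_X0 W \<eta> X Y Z A - augL_grad_X0 W \<eta> X Y Z B = (1 / \<eta>) *\<^sub>R (D + D - W ** D)"
    unfolding augL_grad_X0_def S_def[symmetric] square_root_matrix_mult[OF SS] D_def
    by (simp add: matrix_matrix_mult_diff_left algebra_simps)
  moreover have "norm (D + D - W ** D) \<le> 3 * norm D"
    using norm_triangle_ineq4[of "D + D" "W ** D"] norm_triangle_ineq[of D D] W[of D] by simp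
  ultimately show "dist (augL_grad_X0 W \<eta> X Y Z A) (augL_grad_X0 W \<eta> X Y Z B) \<le> 3 / \<eta> * dist A B"
    using \<open>0 < \<eta>\<close> unfolding dist_norm D_def by (simp add: divide_right_mono)
qed (use \<open>0 < \<eta>\<close> in simp)

lemma ADAPD_augL_grad_X0:
  fixes W :: "real^'n^'n"
  defines "S \<equiv> psd_sqrt (mat 1 - W)"
  assumes alg: "ADAPD g W \<eta> eps Xs X0s Ys Zs" and SS: "S ** S = mat 1 - W" and "\<eta> \<noteq> 0"
  shows "augL_grad_X0 W \<eta> (Xs (Suc k)) (Ys k) (Zs k) (X0s (Suc k))
    = - (1 / \<eta>) *\<^sub>R (W ** (X0s (Suc k) - X0s k))"
proof -
  have "X0s (Suc k) = (1/2) *\<^sub>R (W ** X0s k + Xs (Suc k) + \<eta> *\<^sub>R (Ys k - S ** Zs k))"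
    using alg unfolding ADAPD_def S_def by blast
  then have upd: "2 *\<^sub>R X0s (Suc k) = W ** X0s k + Xs (Suc k) + \<eta> *\<^sub>R (Ys k - S ** Zs k)"
    by simp
  have "\<eta> *\<^sub>R augL_grad_X0 W \<eta> (Xs (Suc k)) (Ys k) (Zs k) (X0s (Suc k))
      = 2 *\<^sub>R X0s (Suc k) - Xs (Suc k) - \<eta> *\<^sub>R (Ys k - S ** Zs k) - W ** X0s (Suc k)"
    unfolding augL_grad_X0_def S_def[symmetric] square_root_matrix_mult[OF SS]
    using \<open>\<eta> \<noteq> 0\<close> by (simp add: scaleR_2 algebra_simps)
  also have "\<dots> = - (W ** (X0s (Suc k) - X0s k))"
    unfolding upd by (simp add: matrix_matrix_mult_diff_left)
  finally have "(1 / \<eta>) *\<^sub>R (\<eta> *\<^sub>R augL_grad_X0 W \<eta> (Xs (Suc k)) (Ys k) (Zs k) (X0s (Suc k)))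
      = (1 / \<eta>) *\<^sub>R - (W ** (X0s (Suc k) - X0s k))"
    by (rule arg_cong)
  then show ?thesis
    using \<open>\<eta> \<noteq> 0\<close> by simp
qed

lemma ADAPD_augL_X0_descent:
  assumes W: "mixing_matrix E W" and "0 < \<eta>" and alg: "ADAPD g W \<eta> eps Xs X0s Ys Zs"
  shows "augL f W \<eta> (Xs (Suc k)) (X0s (Suc k)) (Ys k) (Zs k)
           - augL f W \<eta> (Xs (Suc k)) (X0s k) (Ys k) (Zs k)
         \<le> - (1 / (2 * \<eta>)) * (norm (X0s (Suc k) - X0s k))\<^sup>2"
proof -
  define S where "S = psd_sqrt (mat 1 - W)"
  define D where "D = X0s (Suc k) - X0s k"
  have S: "transpose S = S" "S ** S = mat 1 - W"
    using mixing_matrix_psd_sqrt[OF W] unfolding S_def by auto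
  have "augL f W \<eta> (Xs (Suc k)) (X0s (Suc k)) (Ys k) (Zs k) - augL f W \<eta> (Xs (Suc k)) (X0s k) (Ys k) (Zs k)
      = augL_grad_X0 W \<eta> (Xs (Suc k)) (Ys k) (Zs k) (X0s (Suc k)) \<bullet> D
        - (1 / (2 * \<eta>)) * ((norm D)\<^sup>2 + (norm (S ** D))\<^sup>2)"
    using augL_X0_difference[OF S(1)[unfolded S_def], of f \<eta> "Xs (Suc k)" "X0s (Suc k)" "Ys k" "Zs k" "X0s k"]
    unfolding D_def S_def .
  also have "augL_grad_X0 W \<eta> (Xs (Suc k)) (Ys k) (Zs k) (X0s (Suc k)) = - (1 / \<eta>) *\<^sub>R (W ** D)"
    using ADAPD_augL_grad_X0[OF alg S(2)[unfolded S_def]] \<open>0 < \<eta>\<close> unfolding D_def by simp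
  also have "(- (1 / \<eta>) *\<^sub>R (W ** D)) \<bullet> D - (1 / (2 * \<eta>)) * ((norm D)\<^sup>2 + (norm (S ** D))\<^sup>2)
      = - (1 / \<eta>) * (D \<bullet> (W ** D)) - (1 / (2 * \<eta>)) * (D \<bullet> D + (S ** D) \<bullet> (S ** D))"
    by (simp add: power2_norm_eq_inner inner_commute)
  also have "(S ** D) \<bullet> (S ** D) = D \<bullet> D - D \<bullet> (W ** D)"
    using symmetric_matrix_mult_inner[OF S(1), of D "S ** D"]
    by (simp add: square_root_matrix_mult[OF S(2)] inner_diff_right)
  also have "- (1 / \<eta>) * (D \<bullet> (W ** D)) - (1 / (2 * \<eta>)) * (D \<bullet> D + (D \<bullet> D - D \<bullet> (W ** D)))
      = - (1 / (2 * \<eta>)) * (D \<bullet> D) - (1 / (2 * \<eta>)) * (D \<bullet> D + D \<bullet> (W ** D))"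
    using \<open>0 < \<eta>\<close> by (simp add: field_simps)
  also have "\<dots> \<le> - (1 / (2 * \<eta>)) * (D \<bullet> D)"
    using matrix_mult_quadratic_form_ge[of "-1" W D] mixing_matrix_quadratic_form_bounds(1)[OF W]
      \<open>0 < \<eta>\<close> by simp
  finally show ?thesis
    unfolding D_def by (simp add: power2_norm_eq_inner)
qed

theorem lemma8:
  fixes E :: "'n::finite \<Rightarrow> 'n \<Rightarrow> bool"
    and W :: "real^'n^'n"
    and f :: "'n \<Rightarrow> real^'p::finite \<Rightarrow> real"
    and g :: "'n \<Rightarrow> real^'p \<Rightarrow> real^'p"
    and \<eta> :: real and eps :: "nat \<Rightarrow> real"
    and Xs X0s Ys Zs :: "nat \<Rightarrow> real^'p^'n"
  assumes W: "mixing_matrix E W"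
    and eta: "\<eta> > 0"
    and grad: "\<And>i x. (f i has_derivative (\<lambda>h. g i x \<bullet> h)) (at x)"
    and eps_nonneg: "\<And>k. k \<ge> 1 \<Longrightarrow> eps k \<ge> 0"
    and eps_mono: "\<And>k l. 1 \<le> k \<Longrightarrow> k \<le> l \<Longrightarrow> eps l \<le> eps k"
    and alg: "ADAPD g W \<eta> eps Xs X0s Ys Zs"
  shows "(\<forall>X Y Z. \<exists>G. (\<forall>X0. ((\<lambda>V. augL f W \<eta> X V Y Z) has_derivative (\<lambda>H. G X0 \<bullet> H)) (at X0))
                      \<and> (3 / \<eta>)-lipschitz_on UNIV G)
    \<and> (\<forall>k. augL f W \<eta> (Xs (Suc k)) (X0s (Suc k)) (Ys k) (Zs k)
              - augL f W \<eta> (Xs (Suc k)) (X0s k) (Ys k) (Zs k)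
            \<le> - (1 / (2 * \<eta>)) * (norm (X0s (Suc k) - X0s k))\<^sup>2)"
proof (intro conjI allI)
  fix X Y Z :: "real^'p^'n"
  have "norm (W ** V) \<le> norm V" for V :: "real^'p^'n"
    using matrix_mult_norm_le mixing_matrix_norm_le[OF W] by blast
  then show "\<exists>G. (\<forall>X0. ((\<lambda>V. augL f W \<eta> X V Y Z) has_derivative (\<lambda>H. G X0 \<bullet> H)) (at X0))
      \<and> (3 / \<eta>)-lipschitz_on UNIV G"
    using has_derivative_augL_X0 augL_grad_X0_lipschitz mixing_matrix_psd_sqrt[OF W] eta by blast
qed (rule ADAPD_augL_X0_descent[OF W eta alg])

end
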